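(* Let $P,Q\in\mathbb{C}[X]$ be nonlinear with $n=\deg P\ge m=\deg Q$, both satisfying Hypothesis I, and let $C\subset\mathbb{P}^2(\mathbb{C})$ be the curve $F=0$, $F(z_0,z_1,z_2)=z_2^n\big(P(z_0/z_2)-Q(z_1/z_2)\big)$. With the notation of the context, for $1\le i\le l_0$ let $\mathfrak p_i=(\alpha_i:\beta_{\tau(i)}:1)\in C$, and let orders be computed along an arbitrary nonconstant local holomorphic parameterization of $C$ at the relevant point. Then: (i) if $1\le i\ne j\le l_0$ and $L_{i,j}$ is not identically zero on any component of $C$, then $\operatorname{ord}_{\mathfrak p_i}L_{i,j}\ge\min\{\operatorname{ord}_{\mathfrak p_i}(z_0-\alpha_iz_2),\operatorname{ord}_{\mathfrak p_i}(z_1-\beta_{\tau(i)}z_2)\}$ and $\operatorname{ord}_{\mathfrak p_j}L_{i,j}\ge\min\{\operatorname{ord}_{\mathfrak p_j}(z_0-\alpha_jz_2),\operatorname{ord}_{\mathfrak p_j}(z_1-\beta_{\tau(j)}z_2)\}$; (ii) $(p_i+1)\operatorname{ord}_{\mathfrak p_i}(z_0-\alpha_iz_2)=(q_{\tau(i)}+1)\operatorname{ord}_{\mathfrak p_i}(z_1-\beta_{\tau(i)}z_2)$; (iii) $\operatorname{ord}_{\mathfrak p_i}W(z_1,z_2)\ge\operatorname{ord}_{\mathfrak p_i}(z_1-\beta_{\tau(i)}z_2)-1$.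
   Context: Write $P'(X)=na_n\prod_{i=1}^l(X-\alpha_i)^{p_i}$, $Q'(X)=mb_m\prod_{j=1}^h(X-\beta_j)^{q_j}$ with distinct $\alpha_i$, distinct $\beta_j$. Hypothesis I for $P$: $P(\alpha_i)\ne P(\alpha_j)$ for $i\ne j$; similarly for $Q$. Let $A_0=\{(i,j):P(\alpha_i)=Q(\beta_j)\}$, $l_0=\#A_0$. Under Hypothesis I each $i$ has at most one partner $j$, and the roots are labelled so that $A_0=\{(1,\tau(1)),\dots,(l_0,\tau(l_0))\}$ with $\tau$ injective. For $1\le i\ne j\le l_0$, $L_{i,j}=(z_1-\beta_{\tau(j)}z_2)-\frac{\beta_{\tau(i)}-\beta_{\tau(j)}}{\alpha_i-\alpha_j}(z_0-\alpha_jz_2)$ is the linear form of the line through $(\alpha_i:\beta_{\tau(i)}:1)$ and $(\alpha_j:\beta_{\tau(j)}:1)$. $W(z_1,z_2)=z_1dz_2-z_2dz_1$. For a point $\mathfrak p=(a:b:1)\in C$ and a nonconstant local holomorphic parameterization $\varphi(t)=(x(t):y(t):1)$ of $C$ with $\varphi(0)=\mathfrak p$, $\operatorname{ord}_{\mathfrak p}G$ of a homogeneous polynomial $G$ means $\operatorname{ord}_{t=0}G(x(t),y(t),1)$, and the order of a $1$-form $g(t)\,dt$ is $\operatorname{ord}_{t=0}g$ (so $W(z_1,z_2)$ pulls back to $-y'(t)\,dt$). *)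

theory Defs
  imports "HOL-Complex_Analysis.Complex_Analysis" "HOL-Computational_Algebra.Polynomial"
    "HOL-Library.Extended_Nat"
begin

definition hypI :: "complex poly \<Rightarrow> bool" where
  "hypI P \<longleftrightarrow> (\<forall>a b. poly (pderiv P) a = 0 \<and> poly (pderiv P) b = 0 \<and> a \<noteq> b
                    \<longrightarrow> poly P a \<noteq> poly P b)"

definition ord0 :: "(complex \<Rightarrow> complex) \<Rightarrow> enat" where
  "ord0 g = (if (\<forall>\<^sub>F t in nhds 0. g t = 0) then \<infinity> else enat (nat (zorder g 0)))"

text \<open>phi(t) = (x t : y t : 1) is a nonconstant local holomorphic parameterization of the
  curve P(z0/z2) = Q(z1/z2) (affine part z2 = 1) with phi(0) = (a : b : 1).\<close>
definition local_param ::
  "complex poly \<Rightarrow> complex poly \<Rightarrow> (complex \<Rightarrow> complex) \<Rightarrow> (complex \<Rightarrow> complex) \<Rightarrow> complex \<Rightarrow> complex \<Rightarrow> bool" where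
  "local_param P Q x y a b \<longleftrightarrow>
     (\<exists>r>0. x holomorphic_on ball 0 r \<and> y holomorphic_on ball 0 r \<and>
            (\<forall>t\<in>ball 0 r. poly P (x t) = poly Q (y t))) \<and>
     x 0 = a \<and> y 0 = b \<and> \<not> (\<forall>\<^sub>F t in nhds 0. x t = a \<and> y t = b)"

text \<open>The linear form L_{i,j} (dehomogenized at z2 = 1), for p_i = (a:b:1), p_j = (a':b':1).\<close>
definition Lline :: "complex \<Rightarrow> complex \<Rightarrow> complex \<Rightarrow> complex \<Rightarrow> complex \<Rightarrow> complex \<Rightarrow> complex" where
  "Lline a b a' b' u v = (v - b') - (b - b') / (a - a') * (u - a')"

end

theory Submission
  imports Defs
begin

text \<open>
  Everything is read off power series at \<open>t = 0\<close>: \<open>ord0\<close> is the subdegree of the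
  expansion. Part (i) holds because \<open>L\<^sub>i\<^sub>,\<^sub>j\<close> is a linear combination of
  \<open>z\<^sub>1 - \<beta>\<^sub>\<tau>\<^sub>(\<^sub>i\<^sub>) z\<^sub>2\<close> and \<open>z\<^sub>0 - \<alpha>\<^sub>i z\<^sub>2\<close>, and (iii) because
  differentiation lowers the subdegree by at most one. For (ii), \<open>\<alpha>\<close> is a root of
  multiplicity \<open>p + 1\<close> of \<open>P - P(\<alpha>)\<close>, so \<open>P(x(t)) - P(\<alpha>)\<close> vanishes to order
  \<open>(p + 1) ord (x - \<alpha>)\<close>; likewise for \<open>Q\<close>, and the two functions agree on the curve.
\<close>

lemma ord0_has_fps_expansion:
  assumes "f has_fps_expansion F"
  shows "ord0 f = (if F = 0 then \<infinity> else enat (subdegree F))"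
proof -
  have "(\<forall>\<^sub>F t in nhds 0. f t = 0) \<longleftrightarrow> F = 0"
    using assms fps_expansion_unique_complex has_fps_expansion_0_iff by metis
  then show ?thesis
    using has_fps_expansion_zorder_0[OF assms] by (simp add: ord0_def)
qed

lemma ord0_cong:
  assumes "\<forall>\<^sub>F t in nhds 0. f t = g t"
  shows "ord0 f = ord0 g"
proof -
  have "(\<forall>\<^sub>F t in nhds 0. f t = 0) \<longleftrightarrow> (\<forall>\<^sub>F t in nhds 0. g t = 0)"
    using assms by (auto elim: eventually_elim2)
  moreover have "zorder f 0 = zorder g 0"
    using assms by (intro zorder_cong) (auto simp: eventually_nhds_conv_at)
  ultimately show ?thesis by (simp add: ord0_def)
qed

lemma ord0_diff_mult_ge_min:
  assumes "f analytic_on {0}" "g analytic_on {0}"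
  shows "ord0 (\<lambda>t. f t - c * g t) \<ge> min (ord0 f) (ord0 g)"
proof -
  define F G where "F = fps_expansion f 0" and "G = fps_expansion g 0"
  have hF: "f has_fps_expansion F" and hG: "g has_fps_expansion G"
    using assms analytic_at_imp_has_fps_expansion_0 by (auto simp: F_def G_def)
  define H where "H = F - fps_const c * G"
  have hH: "(\<lambda>t. f t - c * g t) has_fps_expansion H"
    unfolding H_def by (intro fps_expansion_intros hF hG)
  show ?thesis
  proof (cases "H = 0")
    case True
    then show ?thesis using ord0_has_fps_expansion[OF hH] by simp
  next
    case False
    have "\<not> (enat (subdegree H) < ord0 f \<and> enat (subdegree H) < ord0 g)"
    proof
      assume "enat (subdegree H) < ord0 f \<and> enat (subdegree H) < ord0 g"
      then have "F $ subdegree H = 0" "G $ subdegree H = 0"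
        using ord0_has_fps_expansion[OF hF] ord0_has_fps_expansion[OF hG]
        by (auto split: if_splits)
      then have "H $ subdegree H = 0" by (simp add: H_def)
      with False show False by simp
    qed
    then show ?thesis
      using ord0_has_fps_expansion[OF hH] False by (auto simp: not_less min_le_iff_disj)
  qed
qed

lemma ord0_power_mult:
  assumes "f analytic_on {0}" "h analytic_on {0}" "h 0 \<noteq> 0"
  shows "ord0 (\<lambda>t. f t ^ k * h t) = of_nat k * ord0 f"
proof -
  define F H where "F = fps_expansion f 0" and "H = fps_expansion h 0"
  have hF: "f has_fps_expansion F" and hH: "h has_fps_expansion H"
    using assms analytic_at_imp_has_fps_expansion_0 by (auto simp: F_def H_def)
  have H0: "H $ 0 \<noteq> 0"
    using fps_nth_fps_expansion[OF hH, of 0] assms(3) by simp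
  then have "H \<noteq> 0" by auto
  have hP: "(\<lambda>t. f t ^ k * h t) has_fps_expansion F ^ k * H"
    by (intro fps_expansion_intros hF hH)
  show ?thesis
  proof (cases "F = 0")
    case True
    then show ?thesis
      using ord0_has_fps_expansion[OF hP] ord0_has_fps_expansion[OF hF] \<open>H \<noteq> 0\<close> H0
      by (cases k) (simp_all add: of_nat_eq_enat zero_enat_def)
  next
    case False
    then have "subdegree (F ^ k * H) = k * subdegree F"
      using H0 \<open>H \<noteq> 0\<close> by simp
    then show ?thesis
      using ord0_has_fps_expansion[OF hP] ord0_has_fps_expansion[OF hF] False \<open>H \<noteq> 0\<close>
      by (simp add: of_nat_eq_enat)
  qed
qed

lemma poly_diff_eq_power_mult:
  fixes R :: "'a::field_char_0 poly"
  assumes "degree R \<noteq> 0"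
  obtains H where "poly H c \<noteq> 0"
    and "\<And>z. poly R z - poly R c = (z - c) ^ Suc (order c (pderiv R)) * poly H z"
proof -
  define R' where "R' = R - [:poly R c:]"
  have "R' \<noteq> 0"
    using assms by (metis R'_def degree_pCons_0 eq_iff_diff_eq_0)
  moreover have "poly R' c = 0" "pderiv R' = pderiv R"
    by (simp_all add: R'_def pderiv_diff pderiv_pCons)
  ultimately have "order c R' = Suc (order c (pderiv R))"
    using order_pderiv by metis
  then obtain H where H: "R' = [:- c, 1:] ^ Suc (order c (pderiv R)) * H" "\<not> [:- c, 1:] dvd H"
    using order_decomp[OF \<open>R' \<noteq> 0\<close>] by metis
  show ?thesis
  proof (rule that)
    show "poly H c \<noteq> 0"
      using H(2) poly_eq_0_iff_dvd by blast
    fix z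
    have "poly R' z = poly ([:- c, 1:] ^ Suc (order c (pderiv R)) * H) z"
      using H(1) by simp
    then show "poly R z - poly R c = (z - c) ^ Suc (order c (pderiv R)) * poly H z"
      by (simp add: R'_def poly_power del: power_Suc)
  qed
qed

lemma analytic_on_poly [analytic_intros]:
  fixes p :: "complex poly"
  assumes "g analytic_on A"
  shows "(\<lambda>t. poly p (g t)) analytic_on A"
proof -
  have "poly p analytic_on UNIV"
    by (simp add: analytic_on_open poly_holomorphic_on)
  then show ?thesis
    using analytic_on_compose_gen[OF assms] by (auto simp: o_def)
qed

lemma ord0_poly_comp_diff:
  fixes R :: "complex poly"
  assumes "g analytic_on {0}" "degree R \<noteq> 0"
  shows "ord0 (\<lambda>t. poly R (g t) - poly R (g 0))
       = of_nat (Suc (order (g 0) (pderiv R))) * ord0 (\<lambda>t. g t - g 0)"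
proof -
  obtain H where "poly H (g 0) \<noteq> 0"
    and H: "\<And>z. poly R z - poly R (g 0) = (z - g 0) ^ Suc (order (g 0) (pderiv R)) * poly H z"
    using poly_diff_eq_power_mult[OF assms(2)] by metis
  have "ord0 (\<lambda>t. (g t - g 0) ^ Suc (order (g 0) (pderiv R)) * poly H (g t))
      = of_nat (Suc (order (g 0) (pderiv R))) * ord0 (\<lambda>t. g t - g 0)"
    using assms(1) \<open>poly H (g 0) \<noteq> 0\<close> by (intro ord0_power_mult analytic_intros) auto
  then show ?thesis by (simp only: H)
qed

lemma ord0_uminus_deriv_ge:
  assumes "y analytic_on {0}"
  shows "ord0 (\<lambda>t. - deriv y t) \<ge> ord0 (\<lambda>t. y t - b) - 1"
proof -
  define Y where "Y = fps_expansion y 0"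
  have hY: "y has_fps_expansion Y"
    using assms analytic_at_imp_has_fps_expansion_0 by (simp add: Y_def)
  have hD: "(\<lambda>t. y t - b) has_fps_expansion Y - fps_const b"
    by (intro fps_expansion_intros hY)
  have hd: "(\<lambda>t. - deriv y t) has_fps_expansion - fps_deriv Y"
    by (intro fps_expansion_intros hY)
  show ?thesis
  proof (cases "fps_deriv Y = 0")
    case True
    then show ?thesis using ord0_has_fps_expansion[OF hd] by simp
  next
    case False
    then have "Y - fps_const b \<noteq> 0" by auto
    have "subdegree (- fps_deriv Y) \<ge> subdegree (Y - fps_const b) - 1"
    proof (rule subdegree_geI)
      fix i assume "i < subdegree (Y - fps_const b) - 1"
      then have "(Y - fps_const b) $ Suc i = 0" by (intro nth_less_subdegree_zero) simp
      then show "(- fps_deriv Y) $ i = 0" by simp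
    qed (use False in simp)
    then show ?thesis
      using ord0_has_fps_expansion[OF hd] ord0_has_fps_expansion[OF hD] False
        \<open>Y - fps_const b \<noteq> 0\<close>
      by (simp add: one_enat_def)
  qed
qed

lemma local_param_analytic:
  assumes "local_param P Q x y a b"
  shows "x analytic_on {0}" "y analytic_on {0}"
    and "\<forall>\<^sub>F t in nhds 0. poly P (x t) = poly Q (y t)"
    and "x 0 = a" "y 0 = b"
proof -
  obtain r where "r > 0" "x holomorphic_on ball 0 r" "y holomorphic_on ball 0 r"
    and PQ: "\<forall>t\<in>ball 0 r. poly P (x t) = poly Q (y t)"
    using assms by (auto simp: local_param_def)
  then show "x analytic_on {0}" "y analytic_on {0}"
    by (auto simp: analytic_at_ball)
  have "\<forall>\<^sub>F t in nhds 0. t \<in> ball 0 r"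
    using \<open>r > 0\<close> by (intro eventually_nhds_in_open) auto
  then show "\<forall>\<^sub>F t in nhds 0. poly P (x t) = poly Q (y t)"
    by eventually_elim (use PQ in auto)
  show "x 0 = a" "y 0 = b"
    using assms by (auto simp: local_param_def)
qed

lemma Lline_through_first:
  assumes "a \<noteq> a'"
  shows "Lline a b a' b' u v = (v - b) - (b - b') / (a - a') * (u - a)"
  using assms by (simp add: Lline_def field_simps)

lemma local_param_orders_agree:
  assumes "local_param P Q x y a b" "poly P a = poly Q b" "degree P \<noteq> 0" "degree Q \<noteq> 0"
  shows "of_nat (Suc (order a (pderiv P))) * ord0 (\<lambda>t. x t - a)
       = of_nat (Suc (order b (pderiv Q))) * ord0 (\<lambda>t. y t - b)"
proof -
  note param = local_param_analytic[OF assms(1)]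
  have "\<forall>\<^sub>F t in nhds 0. poly P (x t) - poly P (x 0) = poly Q (y t) - poly Q (y 0)"
    using param(3) by eventually_elim (use assms(2) param(4,5) in simp)
  then have "ord0 (\<lambda>t. poly P (x t) - poly P (x 0)) = ord0 (\<lambda>t. poly Q (y t) - poly Q (y 0))"
    by (rule ord0_cong)
  then show ?thesis
    using ord0_poly_comp_diff[OF param(1) assms(3)] ord0_poly_comp_diff[OF param(2) assms(4)] param(4,5)
    by simp
qed

theorem lemma3p3:
  fixes P Q :: "complex poly"
  assumes "degree P \<ge> 2" and "degree Q \<ge> 2" and "degree Q \<le> degree P"
    and "hypI P" and "hypI Q"
  shows
   "(\<forall>a b a' b' x y.
       poly (pderiv P) a = 0 \<and> poly (pderiv Q) b = 0 \<and> poly P a = poly Q b \<and>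
       poly (pderiv P) a' = 0 \<and> poly (pderiv Q) b' = 0 \<and> poly P a' = poly Q b' \<and> a \<noteq> a' \<and>
       local_param P Q x y a b \<and> \<not> (\<forall>\<^sub>F t in nhds 0. Lline a b a' b' (x t) (y t) = 0)
       \<longrightarrow> ord0 (\<lambda>t. Lline a b a' b' (x t) (y t)) \<ge> min (ord0 (\<lambda>t. x t - a)) (ord0 (\<lambda>t. y t - b)))
  \<and> (\<forall>a b a' b' x y.
       poly (pderiv P) a = 0 \<and> poly (pderiv Q) b = 0 \<and> poly P a = poly Q b \<and>
       poly (pderiv P) a' = 0 \<and> poly (pderiv Q) b' = 0 \<and> poly P a' = poly Q b' \<and> a \<noteq> a' \<and>
       local_param P Q x y a' b' \<and> \<not> (\<forall>\<^sub>F t in nhds 0. Lline a b a' b' (x t) (y t) = 0)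
       \<longrightarrow> ord0 (\<lambda>t. Lline a b a' b' (x t) (y t)) \<ge> min (ord0 (\<lambda>t. x t - a')) (ord0 (\<lambda>t. y t - b')))
  \<and> (\<forall>a b x y.
       poly (pderiv P) a = 0 \<and> poly (pderiv Q) b = 0 \<and> poly P a = poly Q b \<and> local_param P Q x y a b
       \<longrightarrow> of_nat (order a (pderiv P) + 1) * ord0 (\<lambda>t. x t - a)
           = of_nat (order b (pderiv Q) + 1) * ord0 (\<lambda>t. y t - b))
  \<and> (\<forall>a b x y.
       poly (pderiv P) a = 0 \<and> poly (pderiv Q) b = 0 \<and> poly P a = poly Q b \<and> local_param P Q x y a b
       \<longrightarrow> ord0 (\<lambda>t. - deriv y t) \<ge> ord0 (\<lambda>t. y t - b) - 1)"
proof -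
  have orders_agree: "of_nat (order a (pderiv P) + 1) * ord0 (\<lambda>t. x t - a)
      = of_nat (order b (pderiv Q) + 1) * ord0 (\<lambda>t. y t - b)"
    if "poly P a = poly Q b" "local_param P Q x y a b" for a b x y
    using local_param_orders_agree[OF that(2,1)] assms(1,2) by simp
  have line_at_first: "ord0 (\<lambda>t. Lline a b a' b' (x t) (y t))
      \<ge> min (ord0 (\<lambda>t. x t - a)) (ord0 (\<lambda>t. y t - b))"
    if "a \<noteq> a'" "local_param P Q x y a b" for a b a' b' x y
    using ord0_diff_mult_ge_min[of "\<lambda>t. y t - b" "\<lambda>t. x t - a" "(b - b') / (a - a')"]
      local_param_analytic[OF that(2)]
    by (simp only: Lline_through_first[OF that(1)] analytic_intros min.commute simp_thms)
  have line_at_second: "ord0 (\<lambda>t. Lline a b a' b' (x t) (y t))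
      \<ge> min (ord0 (\<lambda>t. x t - a')) (ord0 (\<lambda>t. y t - b'))"
    if "local_param P Q x y a' b'" for a b a' b' x y
    using ord0_diff_mult_ge_min[of "\<lambda>t. y t - b'" "\<lambda>t. x t - a'" "(b - b') / (a - a')"]
      local_param_analytic[OF that]
    by (simp only: Lline_def analytic_intros min.commute simp_thms)
  have deriv_bound: "ord0 (\<lambda>t. - deriv y t) \<ge> ord0 (\<lambda>t. y t - b) - 1"
    if "local_param P Q x y a b" for a b x y
    using ord0_uminus_deriv_ge local_param_analytic(2)[OF that] .
  show ?thesis
    using line_at_first line_at_second orders_agree deriv_bound by blast
qed

end
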